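(* Let $p$ be an odd prime and $k\in\{1,2,\ldots,\frac{p-1}2\}$. Then $$\frac{(-1)^k\binom{(p-1)/2+k}{k}}{\binom{(p-1)/2}{k}}\equiv1+2p\sum_{i=1}^k\frac1{2i-1}\equiv3-2(-4)^k\frac{\binom{(p-1)/2}{k}}{\binom{2k}k}\pmod{p^2}.$$
   Context: Congruences are between rational numbers whose denominators are prime to $p$. *)

theory Defs
  imports "HOL-Computational_Algebra.Computational_Algebra" "HOL-Number_Theory.Number_Theory"
begin

definition p_integral :: "nat \<Rightarrow> rat \<Rightarrow> bool" where
  "p_integral p x \<longleftrightarrow> coprime (snd (quotient_of x)) (int p)"

definition rat_cong_pow :: "rat \<Rightarrow> rat \<Rightarrow> nat \<Rightarrow> nat \<Rightarrow> bool" where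
  "rat_cong_pow a b p n \<longleftrightarrow>
     p_integral p a \<and> p_integral p b \<and> p_integral p ((a - b) / of_nat (p ^ n))"

end

theory Submission
  imports Defs
begin

text \<open>Write \<open>p = 2n + 1\<close>. Pairing the factors of the binomial coefficients index by index
  turns both ratios into products \<open>\<Prod>j=1..k. 1 + p v\<^sub>j\<close> with p-integral \<open>v\<^sub>j\<close>:
  \<open>(-1)\<^sup>k C(n+k,k) / C(n,k) = \<Prod> (2j - 1 + p) / (2j - 1 - p)\<close>, i.e. \<open>v\<^sub>j = 2 / (2j - 1 - p)\<close>, and
  \<open>(-4)\<^sup>k C(n,k) / C(2k,k) = \<Prod> (2j - 1 - p) / (2j - 1)\<close>, i.e. \<open>v\<^sub>j = -1 / (2j - 1)\<close>.
  Modulo \<open>p\<^sup>2\<close> such a product is \<open>1 + p \<Sum> v\<^sub>j\<close>, and \<open>2 / (2j - 1 - p) \<equiv> 2 / (2j - 1)\<close> modulo \<open>p\<close>,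
  so all three expressions are congruent to \<open>1 + 2p \<Sum> 1 / (2j - 1)\<close>.\<close>

lemma p_integral_iff:
  "p_integral p x \<longleftrightarrow> (\<exists>a b. b \<noteq> 0 \<and> coprime b (int p) \<and> x = of_int a / of_int b)"
proof
  assume "p_integral p x"
  obtain a b where ab: "quotient_of x = (a, b)" by (cases "quotient_of x")
  then have "x = of_int a / of_int b" "b > 0" using quotient_of_div quotient_of_denom_pos by auto
  with \<open>p_integral p x\<close> ab show "\<exists>a b. b \<noteq> 0 \<and> coprime b (int p) \<and> x = of_int a / of_int b"
    unfolding p_integral_def by (intro exI[of _ a] exI[of _ b]) auto
next
  assume "\<exists>a b. b \<noteq> 0 \<and> coprime b (int p) \<and> x = of_int a / of_int b"
  then obtain a b where b: "b \<noteq> 0" "coprime b (int p)" and x: "x = of_int a / of_int b" by blast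
  obtain a' b' where ab': "quotient_of x = (a', b')" by (cases "quotient_of x")
  then have x': "x = of_int a' / of_int b'" "b' > 0" "coprime a' b'"
    using quotient_of_div quotient_of_denom_pos quotient_of_coprime by auto
  have "rat_of_int (a * b') = rat_of_int (a' * b)"
    using b x x' by (simp add: field_simps)
  then have "b' dvd a' * b" by (metis dvd_triv_right of_int_eq_iff)
  then have "b' dvd b" using \<open>coprime a' b'\<close> by (simp add: coprime_commute coprime_dvd_mult_right_iff)
  then have "coprime b' (int p)" using b(2) coprime_imp_coprime dvd_trans by blast
  then show "p_integral p x" unfolding p_integral_def ab' by simp
qed

lemma p_integral_of_int: "p_integral p (of_int a)"
  unfolding p_integral_iff by (intro exI[of _ a] exI[of _ 1]) auto

lemma p_integral_of_nat: "p_integral p (of_nat a)"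
  using p_integral_of_int[of p "int a"] by simp

lemma p_integral_numeral: "p_integral p (numeral a)"
  using p_integral_of_nat[of p "numeral a"] by simp

lemma p_integral_mult:
  assumes "p_integral p x" "p_integral p y"
  shows "p_integral p (x * y)"
proof -
  obtain a b c d where "b \<noteq> 0" "coprime b (int p)" "x = of_int a / of_int b"
    and "d \<noteq> 0" "coprime d (int p)" "y = of_int c / of_int d"
    using assms unfolding p_integral_iff by blast
  then show ?thesis
    unfolding p_integral_iff by (intro exI[of _ "a * c"] exI[of _ "b * d"]) auto
qed

lemma p_integral_add:
  assumes "p_integral p x" "p_integral p y"
  shows "p_integral p (x + y)"
proof -
  obtain a b c d where "b \<noteq> 0" "coprime b (int p)" "x = of_int a / of_int b"
    and "d \<noteq> 0" "coprime d (int p)" "y = of_int c / of_int d"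
    using assms unfolding p_integral_iff by blast
  then show ?thesis
    unfolding p_integral_iff by (intro exI[of _ "a * d + c * b"] exI[of _ "b * d"]) (auto simp: field_simps)
qed

lemma p_integral_0: "p_integral p 0"
  using p_integral_of_int[of p 0] by simp

lemma p_integral_1: "p_integral p 1"
  using p_integral_of_int[of p 1] by simp

lemma p_integral_uminus: "p_integral p x \<Longrightarrow> p_integral p (- x)"
  using p_integral_mult[OF p_integral_of_int[of p "-1"], of x] by simp

lemma p_integral_diff: "p_integral p x \<Longrightarrow> p_integral p y \<Longrightarrow> p_integral p (x - y)"
  using p_integral_add[OF _ p_integral_uminus, of p x y] by simp

lemma p_integral_sum: "(\<And>j. j \<in> A \<Longrightarrow> p_integral p (f j)) \<Longrightarrow> p_integral p (\<Sum>j\<in>A. f j)"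
  by (induction A rule: infinite_finite_induct) (simp_all add: p_integral_0 p_integral_add)

lemma p_integral_power: "p_integral p x \<Longrightarrow> p_integral p (x ^ n)"
  by (induction n) (simp_all add: p_integral_1 p_integral_mult)

lemma p_integral_inverse_of_int:
  assumes "prime p" "m \<noteq> 0" "\<bar>m\<bar> < int p"
  shows "p_integral p (1 / of_int m)"
proof -
  have "\<not> int p dvd m"
  proof
    assume "int p dvd m"
    then have "\<bar>int p\<bar> \<le> \<bar>m\<bar>"
      by (rule dvd_imp_le_int[OF assms(2)])
    with assms(3) show False by simp
  qed
  then have "coprime m (int p)"
    using prime_imp_coprime[of "int p" m] assms(1) by (simp add: coprime_commute)
  with assms(2) show ?thesis
    unfolding p_integral_iff by (intro exI[of _ 1] exI[of _ m]) auto
qed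

lemma rat_cong_powI:
  assumes "p \<noteq> 0" "p_integral p b" "p_integral p r" "a = b + of_nat p ^ m * r"
  shows "rat_cong_pow a b p m"
proof -
  have "(a - b) / of_nat (p ^ m) = r"
    using assms(1,4) by simp
  moreover have "p_integral p a"
    unfolding assms(4) by (intro p_integral_add p_integral_mult p_integral_power p_integral_of_nat assms(2,3))
  ultimately show ?thesis
    unfolding rat_cong_pow_def using assms(2,3) by simp
qed

lemma prod_one_plus_mult_expansion:
  fixes v :: "'a \<Rightarrow> rat"
  assumes "\<And>j. j \<in> A \<Longrightarrow> p_integral p (v j)" "p_integral p x"
  shows "\<exists>r. p_integral p r \<and> (\<Prod>j\<in>A. 1 + x * v j) = 1 + x * (\<Sum>j\<in>A. v j) + x\<^sup>2 * r"
  using assms(1)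
proof (induction A rule: infinite_finite_induct)
  case (insert i A)
  then obtain r where r: "p_integral p r"
    and prod_A: "(\<Prod>j\<in>A. 1 + x * v j) = 1 + x * (\<Sum>j\<in>A. v j) + x\<^sup>2 * r"
    by blast
  define r' where "r' = v i * (\<Sum>j\<in>A. v j) + (1 + x * v i) * r"
  have "p_integral p r'"
    unfolding r'_def using insert.prems r assms(2)
    by (intro p_integral_add p_integral_mult p_integral_sum p_integral_1) auto
  moreover have "(\<Prod>j\<in>insert i A. 1 + x * v j) = 1 + x * (\<Sum>j\<in>insert i A. v j) + x\<^sup>2 * r'"
    using insert.hyps by (simp add: prod_A r'_def algebra_simps power2_eq_square)
  ultimately show ?case by blast
qed (auto intro: p_integral_0)

lemma of_nat_binomial_add_eq_prod:
  "(of_nat (n + k choose k) :: 'a::field_char_0) = (\<Prod>j=1..k. (of_nat n + of_nat j) / of_nat j)"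
proof (induction k)
  case (Suc k)
  have "of_nat (Suc k) * (of_nat (n + Suc k choose Suc k) :: 'a) = of_nat (n + Suc k) * of_nat (n + k choose k)"
    using Suc_times_binomial[of k "n + k"] by (metis add_Suc_right of_nat_mult)
  then have "(of_nat (n + Suc k choose Suc k) :: 'a) = of_nat (n + k choose k) * ((of_nat n + of_nat (Suc k)) / of_nat (Suc k))"
    by (simp only: of_nat_add) (simp add: field_simps del: of_nat_Suc)
  then show ?case
    using Suc.IH by (simp add: prod.nat_ivl_Suc' del: of_nat_Suc)
qed simp

lemma of_nat_binomial_eq_prod:
  "k \<le> n \<Longrightarrow> (of_nat (n choose k) :: 'a::field_char_0) = (\<Prod>j=1..k. (of_nat n + 1 - of_nat j) / of_nat j)"
proof (induction k)
  case (Suc k)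
  have "Suc k * (n choose Suc k) = (n - k) * (n choose k)"
    using binomial_absorption[of k n] binomial_absorb_comp[of n k] by simp
  then have "of_nat (Suc k) * (of_nat (n choose Suc k) :: 'a) = (of_nat n - of_nat k) * of_nat (n choose k)"
    using Suc.prems by (metis Suc_leD of_nat_diff of_nat_mult)
  then have "(of_nat (n choose Suc k) :: 'a) = of_nat (n choose k) * ((of_nat n + 1 - of_nat (Suc k)) / of_nat (Suc k))"
    by (simp add: field_simps del: of_nat_Suc) (simp add: algebra_simps)
  then show ?case
    using Suc by (simp add: prod.nat_ivl_Suc' del: of_nat_Suc)
qed simp

lemma of_nat_central_binomial_eq_prod:
  "(of_nat (2 * k choose k) :: 'a::field_char_0) = (\<Prod>j=1..k. (4 * of_nat j - 2) / of_nat j)"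
proof (induction k)
  case (Suc k)
  have "Suc k * (2 * Suc k choose Suc k) = 2 * Suc k * (Suc (2 * k) choose k)"
    using Suc_times_binomial[of k "Suc (2 * k)"] by simp
  moreover have "Suc k * (Suc (2 * k) choose k) = Suc (2 * k) * (2 * k choose k)"
    using Suc_times_binomial[of k "2 * k"] binomial_symmetric[of k "Suc (2 * k)"] by simp
  ultimately have "Suc k * (2 * Suc k choose Suc k) = 2 * Suc (2 * k) * (2 * k choose k)"
    by (metis mult.assoc)
  from arg_cong[where f = "of_nat :: nat \<Rightarrow> 'a", OF this]
  have "(of_nat (2 * Suc k choose Suc k) :: 'a) = of_nat (2 * k choose k) * ((4 * of_nat (Suc k) - 2) / of_nat (Suc k))"
    by (simp add: field_simps del: of_nat_Suc) (simp add: algebra_simps)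
  then show ?case
    using Suc.IH by (simp add: prod.nat_ivl_Suc' del: of_nat_Suc)
qed simp

lemma one_div_diff_eq:
  fixes a x :: "'a::field"
  assumes "a \<noteq> 0" "a - x \<noteq> 0"
  shows "1 / (a - x) = 1 / a + x * (1 / a * (1 / (a - x)))"
  using assms by (simp add: field_simps)

lemma odd_of_nat_neq_0:
  assumes "1 \<le> j"
  shows "(2 * of_nat j - 1 :: 'a::field_char_0) \<noteq> 0"
proof -
  have "(2 * of_nat j - 1 :: 'a) = of_nat (2 * j) - of_nat 1"
    by simp
  then show ?thesis
    using assms by (simp only: right_minus_eq of_nat_eq_iff)
qed

lemma odd_minus_of_nat_neq_0:
  assumes "2 * j < p"
  shows "(2 * of_nat j - 1 - of_nat p :: 'a::field_char_0) \<noteq> 0"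
proof -
  have "(2 * of_nat j - 1 - of_nat p :: 'a) = of_nat (2 * j) - of_nat (p + 1)"
    by simp
  then show ?thesis
    using assms by (simp only: right_minus_eq of_nat_eq_iff)
qed

lemma signed_binomial_ratio_eq_prod:
  assumes "k \<le> n"
  shows "((-1) ^ k * of_nat (n + k choose k) / of_nat (n choose k) :: 'a::field_char_0)
       = (\<Prod>j=1..k. 1 + of_nat (2 * n + 1) * (2 / (2 * of_nat j - 1 - of_nat (2 * n + 1))))"
proof -
  have "((-1) ^ k * of_nat (n + k choose k) / of_nat (n choose k) :: 'a)
      = (\<Prod>j=1..k. -1) * (\<Prod>j=1..k. (of_nat n + of_nat j) / of_nat j) / (\<Prod>j=1..k. (of_nat n + 1 - of_nat j) / of_nat j)"
    using assms by (simp add: of_nat_binomial_add_eq_prod of_nat_binomial_eq_prod)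
  also have "\<dots> = (\<Prod>j=1..k. -1 * ((of_nat n + of_nat j) / of_nat j) / ((of_nat n + 1 - of_nat j) / of_nat j))"
    by (simp only: prod.distrib prod_dividef)
  also have "\<dots> = (\<Prod>j=1..k. 1 + of_nat (2 * n + 1) * (2 / (2 * of_nat j - 1 - of_nat (2 * n + 1))))"
  proof (rule prod.cong[OF refl])
    fix j assume j: "j \<in> {1..k}"
    define d :: 'a where "d = of_nat n + 1 - of_nat j"
    have "d = of_nat (Suc n - j)"
      using j assms unfolding d_def by (simp add: of_nat_diff)
    moreover have "Suc n - j \<noteq> 0"
      using j assms by simp
    ultimately have "d \<noteq> 0"
      by (metis of_nat_eq_0_iff)
    have "-1 * ((of_nat n + of_nat j) / of_nat j) / (d / of_nat j) = - (of_nat n + of_nat j) / d"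
      using j by simp
    also have "- (of_nat n + of_nat j) = d - of_nat (2 * n + 1)"
      by (simp add: d_def)
    also have "(d - of_nat (2 * n + 1)) / d = 1 + of_nat (2 * n + 1) * (2 / (- 2 * d))"
      using \<open>d \<noteq> 0\<close> by (simp add: field_simps)
    also have "- 2 * d = 2 * of_nat j - 1 - of_nat (2 * n + 1)"
      by (simp add: d_def algebra_simps)
    finally show "-1 * ((of_nat n + of_nat j) / of_nat j) / ((of_nat n + 1 - of_nat j) / of_nat j)
        = 1 + of_nat (2 * n + 1) * (2 / (2 * of_nat j - 1 - of_nat (2 * n + 1)) :: 'a)"
      unfolding d_def .
  qed
  finally show ?thesis .
qed

lemma binomial_central_binomial_ratio_eq_prod:
  assumes "k \<le> n"
  shows "((-4) ^ k * of_nat (n choose k) / of_nat (2 * k choose k) :: 'a::field_char_0)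
       = (\<Prod>j=1..k. 1 + of_nat (2 * n + 1) * (- 1 / (2 * of_nat j - 1)))"
proof -
  have "((-4) ^ k * of_nat (n choose k) / of_nat (2 * k choose k) :: 'a)
      = (\<Prod>j=1..k. -4) * (\<Prod>j=1..k. (of_nat n + 1 - of_nat j) / of_nat j) / (\<Prod>j=1..k. (4 * of_nat j - 2) / of_nat j)"
    using assms by (simp add: of_nat_central_binomial_eq_prod of_nat_binomial_eq_prod)
  also have "\<dots> = (\<Prod>j=1..k. -4 * ((of_nat n + 1 - of_nat j) / of_nat j) / ((4 * of_nat j - 2) / of_nat j))"
    by (simp only: prod.distrib prod_dividef)
  also have "\<dots> = (\<Prod>j=1..k. 1 + of_nat (2 * n + 1) * (- 1 / (2 * of_nat j - 1)))"
  proof (rule prod.cong[OF refl])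
    fix j assume j: "j \<in> {1..k}"
    then have "(2 * of_nat j - 1 :: 'a) \<noteq> 0"
      by (intro odd_of_nat_neq_0) simp
    have "-4 * ((of_nat n + 1 - of_nat j) / of_nat j) / ((4 * of_nat j - 2) / of_nat j)
        = -4 * (of_nat n + 1 - of_nat j) / (4 * of_nat j - 2 :: 'a)"
      using j by simp
    also have "\<dots> = 2 * (-2 * (of_nat n + 1 - of_nat j)) / (2 * (2 * of_nat j - 1))"
      by (simp add: algebra_simps)
    also have "\<dots> = (2 * of_nat j - 1 - of_nat (2 * n + 1)) / (2 * of_nat j - 1)"
      by (subst mult_divide_mult_cancel_left) (simp_all add: algebra_simps)
    also have "\<dots> = 1 + of_nat (2 * n + 1) * (- 1 / (2 * of_nat j - 1))"
      using \<open>(2 * of_nat j - 1 :: 'a) \<noteq> 0\<close> by (simp add: field_simps)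
    finally show "-4 * ((of_nat n + 1 - of_nat j) / of_nat j) / ((4 * of_nat j - 2) / of_nat j)
        = 1 + of_nat (2 * n + 1) * (- 1 / (2 * of_nat j - 1) :: 'a)" .
  qed
  finally show ?thesis .
qed

definition odd_harmonic :: "nat \<Rightarrow> rat" where
  "odd_harmonic k = (\<Sum>i = 1..k. 1 / (2 * of_nat i - 1))"

lemma p_integral_inverse_odd:
  assumes "prime p" "1 \<le> j" "2 * j < p"
  shows "p_integral p (1 / (2 * of_nat j - 1))"
proof -
  have "(2 * of_nat j - 1 :: rat) = of_int (2 * int j - 1)"
    by simp
  then show ?thesis
    using assms by (simp only:) (rule p_integral_inverse_of_int; auto)
qed

lemma p_integral_inverse_odd_minus:
  assumes "prime p" "1 \<le> j" "2 * j < p"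
  shows "p_integral p (1 / (2 * of_nat j - 1 - of_nat p))"
proof -
  have "(2 * of_nat j - 1 - of_nat p :: rat) = of_int (2 * int j - 1 - int p)"
    by simp
  then show ?thesis
    using assms by (simp only:) (rule p_integral_inverse_of_int; auto)
qed

lemma p_integral_odd_harmonic:
  assumes "prime p" "2 * k < p"
  shows "p_integral p (odd_harmonic k)"
  unfolding odd_harmonic_def using assms by (intro p_integral_sum p_integral_inverse_odd) auto

lemma signed_binomial_ratio_cong:
  assumes "prime p" "p = 2 * n + 1" "k \<le> n"
  shows "rat_cong_pow ((-1) ^ k * of_nat (n + k choose k) / of_nat (n choose k))
           (1 + 2 * of_nat p * odd_harmonic k) p 2"
proof -
  have j: "1 \<le> j" "2 * j < p" if "j \<in> {1..k}" for j
    using that assms(2,3) by auto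
  define v :: "nat \<Rightarrow> rat" where "v j = 2 * (1 / (2 * of_nat j - 1 - of_nat p))" for j
  define w :: "nat \<Rightarrow> rat" where "w j = 2 * (1 / (2 * of_nat j - 1)) * (1 / (2 * of_nat j - 1 - of_nat p))" for j
  have "p_integral p (v j)" "p_integral p (w j)" if "j \<in> {1..k}" for j
    unfolding v_def w_def using j[OF that]
    by (intro p_integral_mult p_integral_numeral p_integral_inverse_odd p_integral_inverse_odd_minus assms(1); simp)+
  then obtain r where "p_integral p r"
    and r: "(\<Prod>j = 1..k. 1 + of_nat p * v j) = 1 + of_nat p * (\<Sum>j = 1..k. v j) + of_nat p ^ 2 * r"
    using prod_one_plus_mult_expansion p_integral_of_nat by blast
  have "v j = 2 * (1 / (2 * of_nat j - 1)) + of_nat p * w j" if "j \<in> {1..k}" for j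
  proof -
    have "1 / (2 * of_nat j - 1 - of_nat p) = 1 / (2 * of_nat j - 1)
        + of_nat p * (1 / (2 * of_nat j - 1) * (1 / (2 * of_nat j - 1 - of_nat p :: rat)))"
      using j[OF that] by (intro one_div_diff_eq odd_of_nat_neq_0 odd_minus_of_nat_neq_0)
    then show ?thesis
      unfolding v_def by (subst \<open>1 / _ = _\<close>) (simp add: w_def algebra_simps)
  qed
  then have "(\<Sum>j = 1..k. v j) = 2 * odd_harmonic k + of_nat p * (\<Sum>j = 1..k. w j)"
    unfolding odd_harmonic_def by (simp add: sum.distrib sum_distrib_left)
  then have "(-1) ^ k * of_nat (n + k choose k) / of_nat (n choose k)
      = (1 + 2 * of_nat p * odd_harmonic k) + of_nat p ^ 2 * ((\<Sum>j = 1..k. w j) + r)"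
    using signed_binomial_ratio_eq_prod[OF assms(3), where 'a = rat] r unfolding v_def assms(2)
    by (simp add: algebra_simps power2_eq_square)
  moreover have "p_integral p (1 + 2 * of_nat p * odd_harmonic k)"
    using assms by (intro p_integral_add p_integral_mult p_integral_1 p_integral_numeral
        p_integral_of_nat p_integral_odd_harmonic) auto
  moreover have "p_integral p ((\<Sum>j = 1..k. w j) + r)"
    using \<open>p_integral p r\<close> \<open>\<And>j. j \<in> {1..k} \<Longrightarrow> p_integral p (w j)\<close>
    by (intro p_integral_add p_integral_sum)
  ultimately show ?thesis
    using assms(1) by (intro rat_cong_powI) auto
qed

lemma central_binomial_ratio_cong:
  assumes "prime p" "p = 2 * n + 1" "k \<le> n"
  shows "rat_cong_pow (1 + 2 * of_nat p * odd_harmonic k)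
           (3 - 2 * (-4) ^ k * of_nat (n choose k) / of_nat (2 * k choose k)) p 2"
proof -
  define u :: "nat \<Rightarrow> rat" where "u j = - 1 / (2 * of_nat j - 1)" for j
  have "p_integral p (u j)" if "j \<in> {1..k}" for j
    unfolding u_def minus_divide_left[symmetric] using that assms(2,3)
    by (intro p_integral_uminus p_integral_inverse_odd assms(1)) auto
  then obtain r where "p_integral p r"
    and r: "(\<Prod>j = 1..k. 1 + of_nat p * u j) = 1 + of_nat p * (\<Sum>j = 1..k. u j) + of_nat p ^ 2 * r"
    using prod_one_plus_mult_expansion p_integral_of_nat by blast
  have "(\<Sum>j = 1..k. u j) = - odd_harmonic k"
    unfolding u_def odd_harmonic_def by (simp add: sum_negf)
  then have eq: "3 - 2 * (-4) ^ k * of_nat (n choose k) / of_nat (2 * k choose k)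
      = (1 + 2 * of_nat p * odd_harmonic k) - of_nat p ^ 2 * (2 * r)"
    using binomial_central_binomial_ratio_eq_prod[OF assms(3), where 'a = rat] r unfolding u_def assms(2)
    by (simp add: algebra_simps power2_eq_square)
  have "p_integral p (2 * r)"
    using \<open>p_integral p r\<close> by (intro p_integral_mult p_integral_numeral)
  have "p_integral p (1 + 2 * of_nat p * odd_harmonic k)"
    using assms by (intro p_integral_add p_integral_mult p_integral_1 p_integral_numeral
        p_integral_of_nat p_integral_odd_harmonic) auto
  then have "p_integral p ((1 + 2 * of_nat p * odd_harmonic k) - of_nat p ^ 2 * (2 * r))"
    using p_integral_mult[OF p_integral_power[OF p_integral_of_nat] \<open>p_integral p (2 * r)\<close>]
    by (rule p_integral_diff)
  then show ?thesis
    unfolding eq using assms(1) \<open>p_integral p (2 * r)\<close>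
    by (intro rat_cong_powI[where r = "2 * r"]) auto
qed

theorem lemma2p5:
  fixes p k :: nat
  assumes "prime p" and "odd p" and "1 \<le> k" and "k \<le> (p - 1) div 2"
  shows "rat_cong_pow
           ((-1) ^ k * of_nat ((p - 1) div 2 + k choose k) / of_nat ((p - 1) div 2 choose k))
           (1 + 2 * of_nat p * (\<Sum>i = 1..k. 1 / (2 * of_nat i - 1))) p 2
       \<and> rat_cong_pow
           (1 + 2 * of_nat p * (\<Sum>i = 1..k. 1 / (2 * of_nat i - 1)))
           (3 - 2 * (-4) ^ k * of_nat ((p - 1) div 2 choose k) / of_nat (2 * k choose k)) p 2"
proof -
  have "p = 2 * ((p - 1) div 2) + 1"
    using assms(2) by (auto elim: oddE)
  then show ?thesis
    using signed_binomial_ratio_cong[OF assms(1) _ assms(4)] central_binomial_ratio_cong[OF assms(1) _ assms(4)]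
    unfolding odd_harmonic_def by blast
qed

end
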